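(* Let $f,g$ be invertible $\mathbb F_q$-linearised polynomials over $\mathbb F_{q^h}$ and $m\ge1$. If $(f,g)$ satisfies property $(Prop_m)$, then so do $(f^{-1},f^{-1}\circ g)$ and $(g^{-1},g^{-1}\circ f)$.
   Context: An $\mathbb F_q$-linearised polynomial over $\mathbb F_{q^h}$ is $\sum_{l=0}^{h-1}a_lX^{q^l}$ with $a_l\in\mathbb F_{q^h}$, viewed as a map of $\mathbb F_{q^h}$; invertible means bijective. Identities $\equiv$ mean equality as maps. Property $(Prop_m)$: $(f,g)$ satisfies it if there exist triples $(a_j,b_j,c_j)\in(\mathbb F_{q^h}^* )^3$, $1\le j\le m$, with $(a_1,b_1,c_1)=(1,1,1)$, such that $a_jf(b_jf^{-1}(X))\equiv g(c_jg^{-1}(X))$ for every $j$, and for all $i\ne j$: $a_i\ne a_j$, $b_i\ne b_j$, $c_i\ne c_j$. *)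

theory Defs
  imports "HOL-Number_Theory.Prime_Powers"
begin

text \<open>An F_q-linearised polynomial over F_{q^h} (the field 'a, with CARD('a) = q^h),
  viewed as a map of the field.\<close>
definition linearised :: "nat \<Rightarrow> nat \<Rightarrow> ('a::{field,finite} \<Rightarrow> 'a) \<Rightarrow> bool" where
  "linearised q h f \<longleftrightarrow> (\<exists>a :: nat \<Rightarrow> 'a. f = (\<lambda>x. \<Sum>l<h. a l * x ^ (q ^ l)))"

definition Prop :: "nat \<Rightarrow> ('a::field \<Rightarrow> 'a) \<Rightarrow> ('a \<Rightarrow> 'a) \<Rightarrow> bool" where
  "Prop m f g \<longleftrightarrow>
    (\<exists>a b c :: nat \<Rightarrow> 'a.
       (\<forall>j\<in>{1..m}. a j \<noteq> 0 \<and> b j \<noteq> 0 \<and> c j \<noteq> 0) \<and>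
       a 1 = 1 \<and> b 1 = 1 \<and> c 1 = 1 \<and>
       (\<forall>j\<in>{1..m}. \<forall>x. a j * f (b j * inv f x) = g (c j * inv g x)) \<and>
       (\<forall>i\<in>{1..m}. \<forall>j\<in>{1..m}. i \<noteq> j \<longrightarrow> a i \<noteq> a j \<and> b i \<noteq> b j \<and> c i \<noteq> c j))"

end

theory Submission
  imports Defs
begin

text \<open>Write \<open>M\<^sub>a\<close> for multiplication by \<open>a\<close>; a triple \<open>(a, b, c)\<close> of \<open>Prop\<^sub>m\<close> witnesses
  \<open>M\<^sub>a \<circ> f \<circ> M\<^sub>b \<circ> f\<inverse> = g \<circ> M\<^sub>c \<circ> g\<inverse>\<close>. Inverting both sides and conjugating by \<open>f\<close>
  gives the same identity for the pair \<open>(f\<inverse>, f\<inverse> \<circ> g)\<close> with the triple \<open>(1/b, 1/a, 1/c)\<close>;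
  swapping \<open>f\<close> and \<open>g\<close> replaces \<open>(a, b, c)\<close> by \<open>(1/a, c, b)\<close>, which handles \<open>(g\<inverse>, g\<inverse> \<circ> f)\<close>.
  Both maps of triples fix \<open>(1, 1, 1)\<close> and preserve non-vanishing and distinctness, so
  \<open>Prop\<^sub>m\<close> carries over.\<close>

definition scaling_conj :: "('a::field \<Rightarrow> 'a) \<Rightarrow> ('a \<Rightarrow> 'a) \<Rightarrow> 'a \<Rightarrow> 'a \<Rightarrow> 'a \<Rightarrow> bool" where
  "scaling_conj f g a b c \<longleftrightarrow> (\<forall>x. a * f (b * inv f x) = g (c * inv g x))"

lemma Prop_iff_scaling_conj:
  "Prop m f g \<longleftrightarrow>
    (\<exists>a b c.
       (\<forall>j\<in>{1..m}. a j \<noteq> 0 \<and> b j \<noteq> 0 \<and> c j \<noteq> 0) \<and>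
       a 1 = 1 \<and> b 1 = 1 \<and> c 1 = 1 \<and>
       (\<forall>j\<in>{1..m}. scaling_conj f g (a j) (b j) (c j)) \<and>
       (\<forall>i\<in>{1..m}. \<forall>j\<in>{1..m}. i \<noteq> j \<longrightarrow> a i \<noteq> a j \<and> b i \<noteq> b j \<and> c i \<noteq> c j))"
  unfolding Prop_def scaling_conj_def ..

lemma Prop_transfer:
  fixes A B C :: "'a::field \<Rightarrow> 'a \<Rightarrow> 'a \<Rightarrow> 'a"
  assumes "Prop m f g"
    and "A 1 1 1 = 1" "B 1 1 1 = 1" "C 1 1 1 = 1"
    and nonzero: "\<And>a b c. a \<noteq> 0 \<Longrightarrow> b \<noteq> 0 \<Longrightarrow> c \<noteq> 0 \<Longrightarrow>
      A a b c \<noteq> 0 \<and> B a b c \<noteq> 0 \<and> C a b c \<noteq> 0"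
    and injective: "\<And>a b c a' b' c'. a \<noteq> a' \<Longrightarrow> b \<noteq> b' \<Longrightarrow> c \<noteq> c' \<Longrightarrow>
      A a b c \<noteq> A a' b' c' \<and> B a b c \<noteq> B a' b' c' \<and> C a b c \<noteq> C a' b' c'"
    and scaling: "\<And>a b c. a \<noteq> 0 \<Longrightarrow> b \<noteq> 0 \<Longrightarrow> c \<noteq> 0 \<Longrightarrow> scaling_conj f g a b c \<Longrightarrow>
      scaling_conj F G (A a b c) (B a b c) (C a b c)"
  shows "Prop m F G"
proof -
  obtain a b c where
      nz: "\<forall>j\<in>{1..m}. a j \<noteq> 0 \<and> b j \<noteq> 0 \<and> c j \<noteq> 0"
    and one: "a 1 = 1" "b 1 = 1" "c 1 = 1"
    and sc: "\<forall>j\<in>{1..m}. scaling_conj f g (a j) (b j) (c j)"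
    and dist: "\<forall>i\<in>{1..m}. \<forall>j\<in>{1..m}. i \<noteq> j \<longrightarrow> a i \<noteq> a j \<and> b i \<noteq> b j \<and> c i \<noteq> c j"
    using \<open>Prop m f g\<close> unfolding Prop_iff_scaling_conj by blast
  let ?a = "\<lambda>j. A (a j) (b j) (c j)"
  let ?b = "\<lambda>j. B (a j) (b j) (c j)"
  let ?c = "\<lambda>j. C (a j) (b j) (c j)"
  have "\<forall>j\<in>{1..m}. ?a j \<noteq> 0 \<and> ?b j \<noteq> 0 \<and> ?c j \<noteq> 0"
    using nz by (simp add: nonzero)
  moreover have "?a 1 = 1 \<and> ?b 1 = 1 \<and> ?c 1 = 1"
    using one assms(2-4) by simp
  moreover have "\<forall>j\<in>{1..m}. scaling_conj F G (?a j) (?b j) (?c j)"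
    using nz sc by (simp add: scaling)
  moreover have "\<forall>i\<in>{1..m}. \<forall>j\<in>{1..m}. i \<noteq> j \<longrightarrow> ?a i \<noteq> ?a j \<and> ?b i \<noteq> ?b j \<and> ?c i \<noteq> ?c j"
    using dist by (simp add: injective)
  ultimately show ?thesis
    unfolding Prop_iff_scaling_conj by (intro exI[of _ ?a] exI[of _ ?b] exI[of _ ?c]) (simp only:)
qed

lemma scaling_conj_swap:
  assumes "a \<noteq> 0" and "scaling_conj f g a b c"
  shows "scaling_conj g f (inverse a) c b"
  unfolding scaling_conj_def
proof
  fix x
  have "a * f (b * inv f x) = g (c * inv g x)"
    using assms(2) by (simp add: scaling_conj_def)
  then show "inverse a * g (c * inv g x) = f (b * inv f x)"
    using \<open>a \<noteq> 0\<close> by (simp add: field_simps)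
qed

lemma scaling_conj_inv:
  fixes f g :: "'a::field \<Rightarrow> 'a"
  assumes "bij f" "bij g" and "a \<noteq> 0" "b \<noteq> 0" "c \<noteq> 0"
    and "scaling_conj f g a b c"
  shows "scaling_conj (inv f) (inv f \<circ> g) (inverse b) (inverse a) (inverse c)"
  unfolding scaling_conj_def
proof
  fix x
  define t where "t = inverse c * inv g (f x)"
  have "g (c * t) = f x"
    using \<open>c \<noteq> 0\<close> \<open>bij g\<close> by (simp add: t_def mult.assoc[symmetric] bij_is_surj surj_f_inv_f)
  then have "a * f (b * inv f (g t)) = f x"
    using \<open>scaling_conj f g a b c\<close> \<open>bij g\<close> by (simp add: scaling_conj_def bij_is_inj)
  then have "f (b * inv f (g t)) = inverse a * f x"
    using \<open>a \<noteq> 0\<close> by (simp add: field_simps)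
  then have "b * inv f (g t) = inv f (inverse a * f x)"
    using \<open>bij f\<close> by (metis bij_inv_eq_iff)
  then have "inverse b * inv f (inverse a * f x) = inv f (g t)"
    using \<open>b \<noteq> 0\<close> by (simp add: field_simps)
  moreover have "inv (inv f \<circ> g) = inv g \<circ> f"
    using assms(1,2) by (simp add: o_inv_distrib bij_imp_bij_inv inv_inv_eq)
  ultimately show "inverse b * inv f (inverse a * inv (inv f) x) =
      (inv f \<circ> g) (inverse c * inv (inv f \<circ> g) x)"
    using \<open>bij f\<close> by (simp add: t_def inv_inv_eq)
qed

lemma Prop_swap:
  assumes "Prop m f g"
  shows "Prop m g f"
  using assms
  by (rule Prop_transfer[where A = "\<lambda>a b c. inverse a" and B = "\<lambda>a b c. c" and C = "\<lambda>a b c. b"])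
    (simp_all add: scaling_conj_swap)

lemma Prop_inv:
  assumes "bij f" "bij g" and "Prop m f g"
  shows "Prop m (inv f) (inv f \<circ> g)"
  using assms(3)
  by (rule Prop_transfer[where A = "\<lambda>a b c. inverse b" and B = "\<lambda>a b c. inverse a"
        and C = "\<lambda>a b c. inverse c"])
    (simp_all add: scaling_conj_inv[OF assms(1,2)])

theorem lemma5p13:
  fixes q h m :: nat and f g :: "'a::{field,finite} \<Rightarrow> 'a"
  assumes "primepow q" and "card (UNIV :: 'a set) = q ^ h"
    and "linearised q h f" and "bij f"
    and "linearised q h g" and "bij g"
    and "m \<ge> 1"
    and "Prop m f g"
  shows "Prop m (inv f) (inv f \<circ> g) \<and> Prop m (inv g) (inv g \<circ> f)"
  using Prop_inv[OF \<open>bij f\<close> \<open>bij g\<close> \<open>Prop m f g\<close>]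
    Prop_inv[OF \<open>bij g\<close> \<open>bij f\<close> Prop_swap[OF \<open>Prop m f g\<close>]]
  by blast

end
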